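(* Let $\Omega\subset\mathbb{R}^n$ be a bounded domain, $\omega\subset\Omega$ a nonempty open set, and $m\ge2$, $k\ge1$ integers. Assume (D1): $\lambda_1<\lambda_2<\cdots<\lambda_m$, and (D2): $\langle\chi_\omega\xi_i,\xi_j\rangle\neq0$ for all $i\in\{1,\dots,m\}$ and $j\in\{1,\dots,k\}$. Then for each $y_0\in L^2(\Omega)$ with $y_0\notin\mathcal{S}_m$ and each finite sequence of positive numbers $\{\bar a_i\}_{i=1}^k$, Problem $(\mathcal{P})$ with $\{\bar a_i\}_{i=1}^k$ has an optimal control.
   Context: $\chi_\omega$ is the characteristic function of $\omega$. Let $\{\xi_i\}_{i\ge1}$ be an orthonormal basis of $L^2(\Omega)$ consisting of eigenfunctions of $-\Delta$ with homogeneous Dirichlet boundary condition, with eigenvalues $0<\lambda_1<\lambda_2\le\lambda_3\le\cdots\to+\infty$; $\langle\cdot,\cdot\rangle$ is the $L^2(\Omega)$ inner product. For $u$ and $y_0\in L^2(\Omega)$, $y(\cdot;u,y_0):\mathbb{R}^+\to L^2(\Omega)$ denotes the solution of $\partial_t y-\Delta y=\chi_\omega u$ in $\Omega\times\mathbb{R}^+$, $y=0$ on $\partial\Omega\times\mathbb{R}^+$, $y(\cdot,0)=y_0$. $\mathcal{S}_m=\mathrm{span}\{\xi_{m+1},\xi_{m+2},\dots\}$ (closed linear span, i.e. the set of $y$ with $\langle y,\xi_i\rangle=0$ for $i\le m$). The control constraint set is $\mathcal{U}_{\{\bar a_i\}_{i=1}^k}=\{\sum_{i=1}^k\alpha_i(\cdot)\xi_i:\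 \alpha_i \text{ measurable from }\mathbb{R}^+\text{ to }[-\bar a_i,\bar a_i]\}$. Problem $(\mathcal{P})$ with $\{\bar a_i\}_{i=1}^k$: $\inf\{t\ge0: y(t;u,y_0)\in\mathcal{S}_m\}$ over $u\in\mathcal{U}_{\{\bar a_i\}_{i=1}^k}$; an optimal control is an admissible $u^*$ with $y(t^*;u^*,y_0)\in\mathcal{S}_m$, $t^*$ being the infimum (in particular the admissible set of controls reaching $\mathcal{S}_m$ is nonempty). *)

theory Defs
  imports "HOL-Analysis.Analysis"
begin

definition L2 :: "'a::euclidean_space set \<Rightarrow> ('a \<Rightarrow> real) set" where
  "L2 \<Omega> = {f. f \<in> borel_measurable (lebesgue_on \<Omega>) \<and> integrable (lebesgue_on \<Omega>) (\<lambda>x. (f x)\<^sup>2)}"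

definition l2_inner :: "'a::euclidean_space set \<Rightarrow> ('a \<Rightarrow> real) \<Rightarrow> ('a \<Rightarrow> real) \<Rightarrow> real" where
  "l2_inner \<Omega> f g = (\<integral>x. f x * g x \<partial>(lebesgue_on \<Omega>))"

definition orthonormal_basis_L2 :: "'a::euclidean_space set \<Rightarrow> (nat \<Rightarrow> 'a \<Rightarrow> real) \<Rightarrow> bool" where
  "orthonormal_basis_L2 \<Omega> \<xi> \<longleftrightarrow>
     (\<forall>i\<ge>1. \<xi> i \<in> L2 \<Omega>) \<and>
     (\<forall>i\<ge>1. \<forall>j\<ge>1. l2_inner \<Omega> (\<xi> i) (\<xi> j) = (if i = j then 1 else 0)) \<and>
     (\<forall>f \<in> L2 \<Omega>. (\<forall>i\<ge>1. l2_inner \<Omega> f (\<xi> i) = 0) \<longrightarrow> (AE x in lebesgue_on \<Omega>. f x = 0))"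

definition pdiff :: "'a::euclidean_space \<Rightarrow> ('a \<Rightarrow> real) \<Rightarrow> 'a \<Rightarrow> real" where
  "pdiff b \<phi> = (\<lambda>x. deriv (\<lambda>t. \<phi> (x + t *\<^sub>R b)) 0)"

text \<open>C^infinity: every iterated partial derivative exists and is (Frechet) differentiable.\<close>
definition smooth_fun :: "('a::euclidean_space \<Rightarrow> real) \<Rightarrow> bool" where
  "smooth_fun \<phi> \<longleftrightarrow> (\<forall>bs. set bs \<subseteq> Basis \<longrightarrow> (\<forall>x. foldr pdiff bs \<phi> differentiable (at x)))"

definition grad :: "('a::euclidean_space \<Rightarrow> real) \<Rightarrow> 'a \<Rightarrow> 'a" where
  "grad \<phi> x = (\<Sum>b\<in>Basis. pdiff b \<phi> x *\<^sub>R b)"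

definition test_fun :: "'a::euclidean_space set \<Rightarrow> ('a \<Rightarrow> real) \<Rightarrow> bool" where
  "test_fun \<Omega> \<phi> \<longleftrightarrow> smooth_fun \<phi> \<and> compact (closure {x. \<phi> x \<noteq> 0}) \<and> closure {x. \<phi> x \<noteq> 0} \<subseteq> \<Omega>"

definition weak_grad :: "'a::euclidean_space set \<Rightarrow> ('a \<Rightarrow> real) \<Rightarrow> ('a \<Rightarrow> 'a) \<Rightarrow> bool" where
  "weak_grad \<Omega> f G \<longleftrightarrow>
     (\<forall>b\<in>Basis. (\<lambda>x. G x \<bullet> b) \<in> L2 \<Omega>) \<and>
     (\<forall>\<phi>. test_fun \<Omega> \<phi> \<longrightarrow> (\<forall>b\<in>Basis.
        (\<integral>x. f x * pdiff b \<phi> x \<partial>(lebesgue_on \<Omega>)) = - (\<integral>x. (G x \<bullet> b) * \<phi> x \<partial>(lebesgue_on \<Omega>))))"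

text \<open>f in H^1_0(Omega) with weak gradient G: f in H^1(Omega) and f is the H^1-limit of test functions.\<close>
definition H01 :: "'a::euclidean_space set \<Rightarrow> ('a \<Rightarrow> real) \<Rightarrow> ('a \<Rightarrow> 'a) \<Rightarrow> bool" where
  "H01 \<Omega> f G \<longleftrightarrow> f \<in> L2 \<Omega> \<and> weak_grad \<Omega> f G \<and>
     (\<exists>\<phi>s. (\<forall>n. test_fun \<Omega> (\<phi>s n)) \<and>
        (\<lambda>n. (\<integral>x. (f x - \<phi>s n x)\<^sup>2 \<partial>(lebesgue_on \<Omega>))
            + (\<integral>x. (norm (G x - grad (\<phi>s n) x))\<^sup>2 \<partial>(lebesgue_on \<Omega>))) \<longlonglongrightarrow> 0)"

definition dirichlet_eigenfun :: "'a::euclidean_space set \<Rightarrow> ('a \<Rightarrow> real) \<Rightarrow> real \<Rightarrow> bool" where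
  "dirichlet_eigenfun \<Omega> \<xi> lam \<longleftrightarrow>
     (\<exists>G. H01 \<Omega> \<xi> G \<and>
        (\<forall>\<phi>. test_fun \<Omega> \<phi> \<longrightarrow>
           (\<integral>x. G x \<bullet> grad \<phi> x \<partial>(lebesgue_on \<Omega>)) = lam * (\<integral>x. \<xi> x * \<phi> x \<partial>(lebesgue_on \<Omega>))))"

text \<open>S_m = closed span of xi_{m+1}, xi_{m+2}, ...\<close>
definition S_set :: "'a::euclidean_space set \<Rightarrow> (nat \<Rightarrow> 'a \<Rightarrow> real) \<Rightarrow> nat \<Rightarrow> ('a \<Rightarrow> real) set" where
  "S_set \<Omega> \<xi> m = {y \<in> L2 \<Omega>. \<forall>i\<in>{1..m}. l2_inner \<Omega> y (\<xi> i) = 0}"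

text \<open>Control u = sum_{i=1}^k alpha_i xi_i with alpha_i measurable, values in [-abar_i, abar_i].\<close>
definition admissible :: "nat \<Rightarrow> (nat \<Rightarrow> real) \<Rightarrow> (nat \<Rightarrow> real \<Rightarrow> real) \<Rightarrow> bool" where
  "admissible k abar \<alpha> \<longleftrightarrow>
     (\<forall>i\<in>{1..k}. \<alpha> i \<in> borel_measurable (lebesgue_on {0..}) \<and> (\<forall>s\<ge>0. \<bar>\<alpha> i s\<bar> \<le> abar i))"

text \<open>Fourier coefficient <y(t; u, y0), xi_j> of the (mild) solution of
  y_t - Laplace y = chi_omega u, y = 0 on the boundary, y(0) = y0, with u = sum_{i=1}^k alpha_i xi_i
  (Duhamel formula in the eigenbasis).\<close>
definition sol_coeff :: "'a::euclidean_space set \<Rightarrow> 'a set \<Rightarrow> (nat \<Rightarrow> 'a \<Rightarrow> real) \<Rightarrow> (nat \<Rightarrow> real)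
     \<Rightarrow> nat \<Rightarrow> (nat \<Rightarrow> real \<Rightarrow> real) \<Rightarrow> ('a \<Rightarrow> real) \<Rightarrow> nat \<Rightarrow> real \<Rightarrow> real" where
  "sol_coeff \<Omega> \<omega> \<xi> lam k \<alpha> y0 j t =
     exp (- lam j * t) * l2_inner \<Omega> y0 (\<xi> j) +
     (\<Sum>i=1..k. (LINT s:{0..t}|lebesgue. exp (- lam j * (t - s)) * \<alpha> i s) *
                l2_inner \<Omega> (\<lambda>x. indicator \<omega> x * \<xi> i x) (\<xi> j))"

text \<open>y(t; u, y0) belongs to S_m.\<close>
definition reaches :: "'a::euclidean_space set \<Rightarrow> 'a set \<Rightarrow> (nat \<Rightarrow> 'a \<Rightarrow> real) \<Rightarrow> (nat \<Rightarrow> real)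
     \<Rightarrow> nat \<Rightarrow> nat \<Rightarrow> (nat \<Rightarrow> real \<Rightarrow> real) \<Rightarrow> ('a \<Rightarrow> real) \<Rightarrow> real \<Rightarrow> bool" where
  "reaches \<Omega> \<omega> \<xi> lam m k \<alpha> y0 t \<longleftrightarrow> (\<forall>j\<in>{1..m}. sol_coeff \<Omega> \<omega> \<xi> lam k \<alpha> y0 j t = 0)"

definition has_optimal_control :: "'a::euclidean_space set \<Rightarrow> 'a set \<Rightarrow> (nat \<Rightarrow> 'a \<Rightarrow> real) \<Rightarrow> (nat \<Rightarrow> real)
     \<Rightarrow> nat \<Rightarrow> nat \<Rightarrow> (nat \<Rightarrow> real) \<Rightarrow> ('a \<Rightarrow> real) \<Rightarrow> bool" where
  "has_optimal_control \<Omega> \<omega> \<xi> lam m k abar y0 \<longleftrightarrow>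
     (\<exists>\<alpha>s ts. admissible k abar \<alpha>s \<and> ts \<ge> 0 \<and> reaches \<Omega> \<omega> \<xi> lam m k \<alpha>s y0 ts \<and>
        ts = Inf {t. t \<ge> 0 \<and> (\<exists>\<alpha>. admissible k abar \<alpha> \<and> reaches \<Omega> \<omega> \<xi> lam m k \<alpha> y0 t)})"

end

theory Submission
  imports Defs "Jordan_Normal_Form.Determinant"
begin

text \<open>In the eigenbasis, reaching \<open>S_m\<close> at time \<open>t\<close> amounts to \<open>m\<close> linear moment equations
  for the control (see \<open>scaled_coeff\<close>).

  Some time is reachable: a first control component supported on \<open>[T, T + 1]\<close> and equal there
  to a combination of \<open>exp (\<lambda> l * (s - T))\<close>, \<open>l \<le> m\<close>, turns the equations into a linear
  system whose matrix is the Gram matrix of the distinct exponentials \<open>exp (\<lambda> l * u)\<close> on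
  \<open>[0, 1]\<close>, hence invertible. Its solution decays exponentially in \<open>T\<close>, so for large \<open>T\<close>
  it respects the control bound; this is where (D1) and \<open>c 1 j \<noteq> 0\<close> from (D2) enter.

  The infimal time \<open>t*\<close> is attained: the moments are Lipschitz in time, so at \<open>t*\<close> they can
  be made arbitrarily small. Among such controls, those of almost minimal \<open>L\<^sup>2\<close> norm form a
  Cauchy sequence by the parallelogram law; a subsequence converges almost everywhere, and
  dominated convergence passes the moment equations to the limit.\<close>

section \<open>Integrals of bounded functions over intervals\<close>

lemma borel_measurable_ident_lebesgue_on [measurable]: "(\<lambda>x::real. x) \<in> borel_measurable (lebesgue_on S)"
  by (simp add: measurable_completion measurable_restrict_space1)

lemma set_lebesgue_integral_eq_integral_lebesgue_on:
  fixes f :: "real \<Rightarrow> real"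
  assumes "S \<in> sets lebesgue"
  shows "(LINT s:S|lebesgue. f s) = integral\<^sup>L (lebesgue_on S) f"
proof -
  have "S \<inter> space lebesgue \<in> sets lebesgue" using assms by simp
  from integral_restrict_space[OF this, of f] show ?thesis
    by (simp add: set_lebesgue_integral_def)
qed

lemma integrable_lebesgue_on_interval_bounded:
  fixes f :: "real \<Rightarrow> real"
  assumes "f \<in> borel_measurable (lebesgue_on {a..b})" "\<And>s. a \<le> s \<Longrightarrow> s \<le> b \<Longrightarrow> \<bar>f s\<bar> \<le> B"
  shows "integrable (lebesgue_on {a..b}) f"
proof -
  have "finite_measure (lebesgue_on {a..b})"
    by (rule finite_measure_lebesgue_on) auto
  then show ?thesis
    by (rule finite_measure.integrable_const_bound[OF _ _ assms(1), of B])
       (use assms(2) in \<open>auto simp: space_restrict_space\<close>)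
qed

lemma abs_integral_lebesgue_on_interval_le:
  fixes f :: "real \<Rightarrow> real"
  assumes "f \<in> borel_measurable (lebesgue_on {a..b})" "\<And>s. a \<le> s \<Longrightarrow> s \<le> b \<Longrightarrow> \<bar>f s\<bar> \<le> B"
    and "a \<le> b"
  shows "\<bar>integral\<^sup>L (lebesgue_on {a..b}) f\<bar> \<le> B * (b - a)"
proof -
  have f: "integrable (lebesgue_on {a..b}) f"
    using integrable_lebesgue_on_interval_bounded[OF assms(1,2)] .
  have B: "integrable (lebesgue_on {a..b}) (\<lambda>s. B)"
    by (rule integrable_lebesgue_on_interval_bounded) (use assms in auto)
  have "\<bar>integral\<^sup>L (lebesgue_on {a..b}) f\<bar> \<le> integral\<^sup>L (lebesgue_on {a..b}) (\<lambda>s. \<bar>f s\<bar>)"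
    by (rule integral_abs_bound)
  also have "\<dots> \<le> integral\<^sup>L (lebesgue_on {a..b}) (\<lambda>s. B)"
    using f B assms(2) by (intro integral_mono) (auto simp: space_restrict_space)
  also have "\<dots> = B * (b - a)"
    using assms(3) by (simp add: space_restrict_space measure_restrict_space)
  finally show ?thesis .
qed

lemma exp_has_integral:
  fixes \<mu> a b :: real
  assumes "a \<le> b" "\<mu> \<noteq> 0"
  shows "((\<lambda>u. exp (\<mu> * (u - a))) has_integral (exp (\<mu> * (b - a)) - 1) / \<mu>) {a..b}"
proof -
  have "((\<lambda>u. exp (\<mu> * (u - a)) / \<mu>) has_real_derivative exp (\<mu> * (u - a))) (at u within {a..b})"
    for u using assms(2) by (auto intro!: derivative_eq_intros)
  then have "((\<lambda>u. exp (\<mu> * (u - a))) has_integral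
      (exp (\<mu> * (b - a)) / \<mu> - exp (\<mu> * (a - a)) / \<mu>)) {a..b}"
    by (intro fundamental_theorem_of_calculus[OF assms(1)])
       (simp add: has_real_derivative_iff_has_vector_derivative)
  then show ?thesis by (simp add: diff_divide_distrib)
qed

section \<open>Limits in \<open>L\<^sup>1\<close> and \<open>L\<^sup>2\<close>\<close>

lemma abs_le_add_square_div:
  fixes u d :: real
  assumes "d > 0"
  shows "\<bar>u\<bar> \<le> d + u\<^sup>2 / d"
proof -
  have "0 \<le> (\<bar>u\<bar> - d)\<^sup>2" by simp
  then have "2 * d * \<bar>u\<bar> \<le> u\<^sup>2 + d\<^sup>2" by (simp add: power2_eq_square algebra_simps)
  moreover have "0 \<le> d * \<bar>u\<bar>" using assms by simp
  ultimately have "d * \<bar>u\<bar> \<le> d * d + u\<^sup>2" by (simp add: power2_eq_square)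
  then show ?thesis using assms by (simp add: field_simps)
qed

lemma L1_Cauchy_if_L2_Cauchy:
  fixes f :: "nat \<Rightarrow> 'a \<Rightarrow> real"
  assumes "finite_measure M"
    and sq: "\<And>a b. integrable M (\<lambda>x. (f a x - f b x)\<^sup>2)"
    and abs: "\<And>a b. integrable M (\<lambda>x. \<bar>f a x - f b x\<bar>)"
    and L2: "\<And>e. e > 0 \<Longrightarrow> \<exists>N. \<forall>a\<ge>N. \<forall>b\<ge>N. (LINT x|M. (f a x - f b x)\<^sup>2) \<le> e"
    and "e > 0"
  shows "\<exists>N. \<forall>a\<ge>N. \<forall>b\<ge>N. (LINT x|M. \<bar>f a x - f b x\<bar>) < e"
proof -
  interpret finite_measure M by fact
  define \<mu> where "\<mu> = measure M (space M)"
  define \<delta> where "\<delta> = e / (2 * (\<mu> + 1))"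
  have \<mu>: "0 < \<mu> + 1" unfolding \<mu>_def by (simp add: add_nonneg_pos)
  have "\<delta> > 0" unfolding \<delta>_def using \<open>e > 0\<close> \<mu> by simp
  have "\<delta> * \<mu> = e / 2 * (\<mu> / (\<mu> + 1))" unfolding \<delta>_def using \<mu> by (simp add: field_simps)
  also have "\<dots> < e / 2 * 1" using \<open>e > 0\<close> \<mu> by (intro mult_strict_left_mono) auto
  finally have \<delta>: "\<delta> > 0" "\<delta> * measure M (space M) < e / 2" using \<open>\<delta> > 0\<close> unfolding \<mu>_def by auto
  obtain N where N: "\<forall>a\<ge>N. \<forall>b\<ge>N. (LINT x|M. (f a x - f b x)\<^sup>2) \<le> e * \<delta> / 4"
    using L2[of "e * \<delta> / 4"] \<open>e > 0\<close> \<delta> by auto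
  show ?thesis
  proof (intro exI allI impI)
    fix a b assume ab: "N \<le> a" "N \<le> b"
    \<comment> \<open>\<open>|u| \<le> \<delta> + u\<^sup>2/\<delta>\<close> with \<open>\<delta>\<close> chosen so that both terms are below \<open>e/2\<close>\<close>
    have "(LINT x|M. \<bar>f a x - f b x\<bar>) \<le> (LINT x|M. \<delta> + (f a x - f b x)\<^sup>2 / \<delta>)"
      using sq abs by (intro integral_mono abs_le_add_square_div \<delta>(1)) auto
    also have "\<dots> = \<delta> * measure M (space M) + (LINT x|M. (f a x - f b x)\<^sup>2) / \<delta>"
      using sq by (simp add: Bochner_Integration.integral_add)
    also have "(LINT x|M. (f a x - f b x)\<^sup>2) / \<delta> \<le> (e * \<delta> / 4) / \<delta>"
      using N ab \<delta>(1) by (intro divide_right_mono) auto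
    also have "(e * \<delta> / 4) / \<delta> = e / 4" using \<delta>(1) by simp
    finally show "(LINT x|M. \<bar>f a x - f b x\<bar>) < e" using \<delta>(2) \<open>e > 0\<close> by linarith
  qed
qed

lemma L1_Cauchy_common_AE_Cauchy_subseq:
  fixes s :: "nat \<Rightarrow> nat \<Rightarrow> 'a \<Rightarrow> real"
  assumes "finite I"
    and "\<And>n i. i \<in> I \<Longrightarrow> integrable M (s n i)"
    and "\<And>i e. i \<in> I \<Longrightarrow> e > 0 \<Longrightarrow> \<exists>N. \<forall>a\<ge>N. \<forall>b\<ge>N. (LINT x|M. \<bar>s a i x - s b i x\<bar>) < e"
  shows "\<exists>r. strict_mono r \<and> (\<forall>i\<in>I. AE x in M. Cauchy (\<lambda>n. s (r n) i x))"
  using assms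
proof (induction I arbitrary: s rule: finite_induct)
  case empty
  then show ?case by (auto intro: strict_mono_id)
next
  case (insert i0 I)
  obtain r where r: "strict_mono r" "\<forall>i\<in>I. AE x in M. Cauchy (\<lambda>n. s (r n) i x)"
    using insert.IH[of s] insert.prems by blast
  have L1: "\<exists>N. \<forall>a\<ge>N. \<forall>b\<ge>N. (LINT x|M. norm (s (r a) i0 x - s (r b) i0 x)) < e" if e: "e > 0" for e
  proof -
    obtain N where "\<forall>a\<ge>N. \<forall>b\<ge>N. (LINT x|M. \<bar>s a i0 x - s b i0 x\<bar>) < e"
      using insert.prems(2)[of i0 e] e by auto
    then show ?thesis
      using seq_suble[OF r(1)] by (intro exI[of _ N]) (auto intro: le_trans)
  qed
  obtain r' where r': "strict_mono r'" "AE x in M. Cauchy (\<lambda>n. s (r (r' n)) i0 x)"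
    using cauchy_L1_AE_cauchy_subseq[of M "\<lambda>n. s (r n) i0", OF _ L1] insert.prems(1) by auto
  have "AE x in M. Cauchy (\<lambda>n. s (r (r' n)) i x)" if "i \<in> I" for i
  proof -
    have "AE x in M. Cauchy (\<lambda>n. s (r n) i x)" using r(2) that by auto
    then show ?thesis
      by eventually_elim (use Cauchy_subseq_Cauchy[OF _ r'(1)] in \<open>auto simp: o_def\<close>)
  qed
  then show ?case
    using r'(2) strict_mono_o[OF r(1) r'(1), unfolded comp_def] by (intro exI[of _ "r \<circ> r'"]) auto
qed

lemma midpoint_minimizing_seq_Cauchy:
  fixes U :: "'f set" and D Nrm :: "'f \<Rightarrow> real" and mid :: "'f \<Rightarrow> 'f \<Rightarrow> 'f"
    and Q :: "'f \<Rightarrow> 'f \<Rightarrow> real"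
  assumes mid: "\<And>a b. a \<in> U \<Longrightarrow> b \<in> U \<Longrightarrow> mid a b \<in> U \<and> D (mid a b) \<le> max (D a) (D b) \<and>
                    Nrm (mid a b) + Q a b = (Nrm a + Nrm b) / 2"
    and bnd: "\<And>a. a \<in> U \<Longrightarrow> 0 \<le> Nrm a \<and> Nrm a \<le> B"
    and inf0: "\<And>e. e > 0 \<Longrightarrow> \<exists>a\<in>U. D a \<le> e"
  shows "\<exists>h. (\<forall>n. h n \<in> U \<and> D (h n) \<le> 1 / Suc n) \<and>
             (\<forall>e>0. \<exists>N. \<forall>n\<ge>N. \<forall>l\<ge>N. Q (h n) (h l) \<le> e)"
proof -
  define A where "A n = {a\<in>U. D a \<le> 1 / Suc n}" for n
  define d where "d n = Inf (Nrm ` A n)" for n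
  have A_ne: "A n \<noteq> {}" for n
    using inf0[of "1 / Suc n"] unfolding A_def by auto
  have bdd: "bdd_below (Nrm ` A n)" for n
    using bnd unfolding A_def bdd_below_def by auto
  have d_le: "d n \<le> Nrm a" if "a \<in> A n" for a n
    unfolding d_def using bdd that by (simp add: cInf_lower)
  have A_antimono: "A l \<subseteq> A n" if "n \<le> l" for n l
    using that unfolding A_def by (auto intro: order_trans[OF _ frac_le])
  have "incseq d"
    unfolding d_def using A_ne bdd A_antimono
    by (intro monoI cInf_superset_mono image_mono) auto
  moreover have "d n \<le> B" for n
    using A_ne[of n] d_le bnd unfolding A_def by fastforce
  ultimately obtain L where dL: "d \<longlonglongrightarrow> L" "\<And>n. d n \<le> L"
    using incseq_convergent[of d B] by blast
  have "\<exists>a. a \<in> A n \<and> Nrm a < d n + 1 / Suc n" for n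
    using cInf_lessD[of "Nrm ` A n" "d n + 1 / Suc n"] A_ne unfolding d_def by auto
  then obtain h where h: "\<And>n. h n \<in> A n" "\<And>n. Nrm (h n) < d n + 1 / Suc n"
    by metis
  \<comment> \<open>The midpoint of \<open>h n\<close> and \<open>h l\<close> stays in \<open>A p\<close>, so its norm is at least \<open>d p\<close>.\<close>
  have Q_le: "Q (h n) (h l) \<le> L - d p + 1 / Suc p" if "p \<le> n" "p \<le> l" for n l p
  proof -
    have hA: "h n \<in> A p" "h l \<in> A p" using h(1) A_antimono that by blast+
    then have "h n \<in> U" "h l \<in> U" unfolding A_def by auto
    note m = mid[OF this]
    then have "mid (h n) (h l) \<in> A p" using hA unfolding A_def by auto
    then have "d p \<le> Nrm (mid (h n) (h l))" by (rule d_le)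
    moreover have "1 / real (Suc n) \<le> 1 / Suc p" "1 / real (Suc l) \<le> 1 / Suc p"
      using that by (auto intro!: divide_left_mono)
    ultimately show ?thesis
      using m dL(2)[of n] dL(2)[of l] h(2)[of n] h(2)[of l] by argo
  qed
  have "\<exists>N. \<forall>n\<ge>N. \<forall>l\<ge>N. Q (h n) (h l) \<le> e" if e: "e > 0" for e
  proof -
    obtain N1 where N1: "\<And>n. n \<ge> N1 \<Longrightarrow> dist (d n) L < e / 2"
      using dL(1) e unfolding LIMSEQ_def by (meson half_gt_zero)
    obtain N2 where N2: "1 / Suc N2 < e / 2"
      using reals_Archimedean e by (metis half_gt_zero inverse_eq_divide of_nat_Suc)
    define N where "N = max N1 N2"
    have "L - d N < e / 2" using N1[of N] dL(2) unfolding N_def by (auto simp: dist_real_def)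
    moreover have "1 / real (Suc N) \<le> 1 / Suc N2" unfolding N_def by (auto intro!: divide_left_mono)
    ultimately have "Q (h n) (h l) \<le> e" if "N \<le> n" "N \<le> l" for n l
      using Q_le[OF that] N2 by linarith
    then show ?thesis by blast
  qed
  then show ?thesis using h(1) unfolding A_def by blast
qed

section \<open>Sums of exponentials\<close>

lemma exp_sum_eq_0_imp_coeffs_eq_0:
  fixes lm v :: "nat \<Rightarrow> real"
  assumes "finite J" "inj_on lm J" "\<forall>u\<in>{0<..<1}. (\<Sum>l\<in>J. v l * exp (lm l * u)) = 0"
  shows "\<forall>l\<in>J. v l = 0"
  using assms
proof (induction J arbitrary: lm v rule: finite_induct)
  case empty
  then show ?case by simp
next
  case (insert l0 J)
  \<comment> \<open>Divide by \<open>exp (lm l0 * u)\<close> and differentiate: the constant term disappears.\<close>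
  define H where "H u = v l0 + (\<Sum>l\<in>J. v l * exp ((lm l - lm l0) * u))" for u
  have H0: "H u = 0" if "u \<in> {0<..<1}" for u
  proof -
    have "H u = exp (- lm l0 * u) * (\<Sum>l\<in>insert l0 J. v l * exp (lm l * u))"
      unfolding H_def using insert.hyps
      by (simp add: sum_distrib_left algebra_simps mult_exp_exp[symmetric] flip: exp_add)
    then show ?thesis using insert.prems(2) that by simp
  qed
  have "(\<Sum>l\<in>J. (v l * (lm l - lm l0)) * exp ((lm l - lm l0) * u)) = 0" if u: "u \<in> {0<..<1}" for u
  proof -
    have der: "(H has_real_derivative (\<Sum>l\<in>J. (v l * (lm l - lm l0)) * exp ((lm l - lm l0) * u))) (at u)"
      unfolding H_def by (auto intro!: derivative_eq_intros sum.cong simp: algebra_simps)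
    have const: "\<forall>y. \<bar>u - y\<bar> < min u (1 - u) \<longrightarrow> H u = H y"
      using H0 u by (auto simp: abs_less_iff)
    show ?thesis
      by (rule DERIV_local_const[OF der _ const]) (use u in auto)
  qed
  moreover have "inj_on (\<lambda>l. lm l - lm l0) J" using insert.prems(1) by (auto simp: inj_on_def)
  ultimately have "\<forall>l\<in>J. v l * (lm l - lm l0) = 0"
    using insert.IH[of "\<lambda>l. lm l - lm l0" "\<lambda>l. v l * (lm l - lm l0)"] by auto
  moreover have "lm l \<noteq> lm l0" if "l \<in> J" for l
    using insert.prems(1) insert.hyps(2) that by (auto simp: inj_on_def)
  ultimately have vJ: "\<forall>l\<in>J. v l = 0" by auto
  have "H (1/2) = 0" by (rule H0) auto
  then have "v l0 = 0" unfolding H_def using vJ by simp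
  with vJ show ?case by auto
qed

text \<open>\<open>exp_gram lm j l = \<integral>\<^sub>0\<^sup>1 exp (lm j * u) * exp (lm l * u) du\<close> when \<open>lm j + lm l \<noteq> 0\<close>.\<close>

definition exp_gram :: "(nat \<Rightarrow> real) \<Rightarrow> nat \<Rightarrow> nat \<Rightarrow> real" where
  "exp_gram lm j l = (exp (lm j + lm l) - 1) / (lm j + lm l)"

lemma exp_gram_injective:
  fixes lm v :: "nat \<Rightarrow> real"
  assumes pos: "\<forall>l\<in>{1..m}. lm l > 0" and inj: "inj_on lm {1..m}"
    and h: "\<forall>j\<in>{1..m}. (\<Sum>l=1..m. exp_gram lm j l * v l) = 0"
  shows "\<forall>l\<in>{1..m}. v l = 0"
proof -
  \<comment> \<open>The continuous square \<open>g\<close> has integral \<open>v\<^sup>T G v = 0\<close> over \<open>[0, 1]\<close>.\<close>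
  define g where "g u = (\<Sum>l=1..m. v l * exp (lm l * u))\<^sup>2" for u :: real
  have g_eq: "g = (\<lambda>u. \<Sum>j=1..m. \<Sum>l=1..m. v j * v l * exp ((lm j + lm l) * (u - 0)))"
    unfolding g_def power2_eq_square sum_product
    by (intro ext sum.cong refl) (simp add: algebra_simps exp_add)
  have "(g has_integral (\<Sum>j=1..m. \<Sum>l=1..m. v j * v l * exp_gram lm j l)) {0..1}"
    unfolding g_eq exp_gram_def
  proof (intro has_integral_sum finite_atLeastAtMost has_integral_mult_right)
    fix j l assume "j \<in> {1..m}" "l \<in> {1..m}"
    then have "lm j + lm l \<noteq> 0" using pos by (smt (verit))
    from exp_has_integral[OF _ this, of 0 1]
    show "((\<lambda>u. exp ((lm j + lm l) * (u - 0))) has_integral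
        (exp (lm j + lm l) - 1) / (lm j + lm l)) {0..1}" by simp
  qed
  moreover have "(\<Sum>j=1..m. \<Sum>l=1..m. v j * v l * exp_gram lm j l) =
      (\<Sum>j=1..m. v j * (\<Sum>l=1..m. exp_gram lm j l * v l))"
    by (simp add: sum_distrib_left algebra_simps)
  ultimately have g0: "(g has_integral 0) (cbox 0 1)" using h by simp
  have gc: "continuous_on (cbox 0 1) g" unfolding g_def by (intro continuous_intros)
  have "g u = 0" if "u \<in> {0<..<1}" for u
    by (rule has_integral_0_cbox_imp_0[OF gc _ g0]) (use that in \<open>auto simp: g_def\<close>)
  then show ?thesis
    by (intro exp_sum_eq_0_imp_coeffs_eq_0[OF finite_atLeastAtMost inj]) (simp add: g_def)
qed

section \<open>Square linear systems\<close>

lemma sum_atLeastAtMost_Suc_0_shift: "(\<Sum>l=Suc 0..m. f l) = (\<Sum>a=0..<m. f (Suc a))"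
  by (induct m) (auto simp: atLeastAtMostSuc_conv add.commute)

lemma injective_square_system_solvable:
  fixes G :: "nat \<Rightarrow> nat \<Rightarrow> real"
  assumes inj: "\<And>v. \<forall>j\<in>{1..m}. (\<Sum>l=1..m. G j l * v l) = 0 \<Longrightarrow> \<forall>l\<in>{1..m}. v l = 0"
  shows "\<exists>B. \<forall>w. \<forall>j\<in>{1..m}. (\<Sum>l=1..m. G j l * (\<Sum>p=1..m. B l p * w p)) = w j"
proof -
  define A where "A = mat m m (\<lambda>(a, b). G (Suc a) (Suc b))"
  have A: "A \<in> carrier_mat m m" unfolding A_def by simp
  have A_mult: "(A *\<^sub>v v) $ (j - 1) = (\<Sum>l=1..m. G j l * v $ (l - 1))"
    if "j \<in> {1..m}" "v \<in> carrier_vec m" for j v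
  proof -
    have row: "(A *\<^sub>v v) $ a = (\<Sum>l=1..m. G (Suc a) l * v $ (l - 1))" if "a < m" for a
      using that \<open>v \<in> carrier_vec m\<close> unfolding A_def
      by (simp add: scalar_prod_def sum_atLeastAtMost_Suc_0_shift)
    from \<open>j \<in> {1..m}\<close> have "j - 1 < m" "Suc (j - 1) = j" by auto
    with row[of "j - 1"] show ?thesis by simp
  qed
  have "det A \<noteq> 0"
  proof
    assume "det A = 0"
    then obtain v where v: "v \<in> carrier_vec m" "v \<noteq> 0\<^sub>v m" "A *\<^sub>v v = 0\<^sub>v m"
      using det_0_iff_vec_prod_zero_field[OF A] by blast
    have "(\<Sum>l=1..m. G j l * v $ (l - 1)) = 0" if "j \<in> {1..m}" for j
      using A_mult[OF that v(1)] v(3) that by auto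
    then have "v $ i = 0" if "i < m" for i
      using inj[of "\<lambda>l. v $ (l - 1)"] that by (metis Suc_leI atLeastAtMost_iff diff_Suc_1 le_add1 plus_1_eq_Suc)
    then have "v = 0\<^sub>v m"
      using v(1) by (intro eq_vecI) auto
    with v(2) show False by simp
  qed
  from det_non_zero_imp_unit[OF A this]
  obtain B where B: "B \<in> carrier_mat m m" "A * B = 1\<^sub>m m"
    unfolding Units_def ring_mat_def by auto
  show ?thesis
  proof (intro exI allI ballI)
    fix w :: "nat \<Rightarrow> real" and j assume j: "j \<in> {1..m}"
    define wv where "wv = vec m (\<lambda>a. w (Suc a))"
    have wv: "wv \<in> carrier_vec m" unfolding wv_def by simp
    have "(\<Sum>p=1..m. B $$ (l - 1, p - 1) * w p) = (B *\<^sub>v wv) $ (l - 1)" if "l \<in> {1..m}" for l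
    proof -
      have "l - 1 < dim_row B" "dim_col B = m" using that B(1) by auto
      then show ?thesis unfolding wv_def by (simp add: scalar_prod_def sum_atLeastAtMost_Suc_0_shift)
    qed
    then have "(\<Sum>l=1..m. G j l * (\<Sum>p=1..m. B $$ (l - 1, p - 1) * w p)) =
        (\<Sum>l=1..m. G j l * (B *\<^sub>v wv) $ (l - 1))"
      by (intro sum.cong) auto
    also have "\<dots> = (A *\<^sub>v (B *\<^sub>v wv)) $ (j - 1)"
      using A_mult[OF j] B(1) wv by simp
    also have "A *\<^sub>v (B *\<^sub>v wv) = wv"
      using A B wv by (simp add: assoc_mult_mat_vec[symmetric])
    finally show "(\<Sum>l=1..m. G j l * (\<Sum>p=1..m. B $$ (l - 1, p - 1) * w p)) = w j"
      using j unfolding wv_def by auto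
  qed
qed

section \<open>Moment form of the state\<close>

text \<open>\<open>scaled_coeff lam k c z j \<alpha> t = exp (lam j * t) * \<langle>y(t), \<xi> j\<rangle>\<close> when
  \<open>c i j = \<langle>\<chi>\<^sub>\<omega> \<xi> i, \<xi> j\<rangle>\<close> and \<open>z j = \<langle>y0, \<xi> j\<rangle>\<close>.\<close>

definition scaled_coeff :: "(nat \<Rightarrow> real) \<Rightarrow> nat \<Rightarrow> (nat \<Rightarrow> nat \<Rightarrow> real) \<Rightarrow> (nat \<Rightarrow> real)
    \<Rightarrow> nat \<Rightarrow> (nat \<Rightarrow> real \<Rightarrow> real) \<Rightarrow> real \<Rightarrow> real" where
  "scaled_coeff lam k c z j \<alpha> t =
     z j + (\<Sum>i=1..k. integral\<^sup>L (lebesgue_on {0..t}) (\<lambda>s. exp (lam j * s) * \<alpha> i s) * c i j)"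

definition reaching_times :: "(nat \<Rightarrow> real) \<Rightarrow> nat \<Rightarrow> (nat \<Rightarrow> nat \<Rightarrow> real) \<Rightarrow> (nat \<Rightarrow> real)
    \<Rightarrow> nat \<Rightarrow> (nat \<Rightarrow> real) \<Rightarrow> real set" where
  "reaching_times lam k c z m abar =
     {t. 0 \<le> t \<and> (\<exists>\<alpha>. admissible k abar \<alpha> \<and> (\<forall>j\<in>{1..m}. scaled_coeff lam k c z j \<alpha> t = 0))}"

lemma sol_coeff_eq_scaled_coeff:
  "sol_coeff \<Omega> \<omega> \<xi> lam k \<alpha> y0 j t =
     exp (- lam j * t) * scaled_coeff lam k (\<lambda>i j. l2_inner \<Omega> (\<lambda>x. indicator \<omega> x * \<xi> i x) (\<xi> j))
       (\<lambda>j. l2_inner \<Omega> y0 (\<xi> j)) j \<alpha> t"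
proof -
  have "(LINT s:{0..t}|lebesgue. exp (- lam j * (t - s)) * \<alpha> i s) =
        integral\<^sup>L (lebesgue_on {0..t}) (\<lambda>s. exp (- lam j * t) * (exp (lam j * s) * \<alpha> i s))" for i
    by (subst set_lebesgue_integral_eq_integral_lebesgue_on) (auto simp: mult_exp_exp algebra_simps)
  then have "(LINT s:{0..t}|lebesgue. exp (- lam j * (t - s)) * \<alpha> i s) =
        exp (- lam j * t) * integral\<^sup>L (lebesgue_on {0..t}) (\<lambda>s. exp (lam j * s) * \<alpha> i s)" for i
    by simp
  then show ?thesis
    unfolding sol_coeff_def scaled_coeff_def by (simp add: algebra_simps sum_distrib_left)
qed

lemma reaches_iff_scaled_coeff:
  "reaches \<Omega> \<omega> \<xi> lam m k \<alpha> y0 t \<longleftrightarrow>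
    (\<forall>j\<in>{1..m}. scaled_coeff lam k (\<lambda>i j. l2_inner \<Omega> (\<lambda>x. indicator \<omega> x * \<xi> i x) (\<xi> j))
       (\<lambda>j. l2_inner \<Omega> y0 (\<xi> j)) j \<alpha> t = 0)"
  unfolding reaches_def sol_coeff_eq_scaled_coeff by simp

lemma admissible_measurable_on:
  assumes "admissible k abar \<alpha>" "i \<in> {1..k}" "0 \<le> a"
  shows "\<alpha> i \<in> borel_measurable (lebesgue_on {a..b})"
  by (rule measurable_restrict_mono[where A = "{0..}"]) (use assms in \<open>auto simp: admissible_def\<close>)

lemma admissible_bound:
  "admissible k abar \<alpha> \<Longrightarrow> i \<in> {1..k} \<Longrightarrow> 0 \<le> s \<Longrightarrow> \<bar>\<alpha> i s\<bar> \<le> abar i"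
  unfolding admissible_def by auto

lemma admissible_square_bound:
  assumes "admissible k abar \<alpha>" "i \<in> {1..k}" "0 \<le> s"
  shows "(\<alpha> i s)\<^sup>2 \<le> (abar i)\<^sup>2"
  using power_mono[OF admissible_bound[OF assms] abs_ge_zero, of 2] by simp

lemma admissible_midpoint:
  assumes "admissible k abar a" "admissible k abar b"
  shows "admissible k abar (\<lambda>i s. (a i s + b i s) / 2)"
  unfolding admissible_def
proof (intro ballI conjI allI impI)
  fix i assume i: "i \<in> {1..k}"
  show "(\<lambda>s. (a i s + b i s) / 2) \<in> borel_measurable (lebesgue_on {0..})"
    using assms i unfolding admissible_def by (intro borel_measurable_divide borel_measurable_add) auto
  fix s :: real assume "0 \<le> s"
  then show "\<bar>(a i s + b i s) / 2\<bar> \<le> abar i"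
    using admissible_bound[OF assms(1) i] admissible_bound[OF assms(2) i] by fastforce
qed

lemma abs_exp_mult_admissible_le:
  assumes "admissible k abar \<alpha>" "i \<in> {1..k}" "0 \<le> s" "s \<le> t"
  shows "\<bar>exp (l * s) * \<alpha> i s\<bar> \<le> exp (\<bar>l\<bar> * t) * abar i"
proof -
  have "l * s \<le> \<bar>l\<bar> * s" using assms(3) by (intro mult_right_mono) auto
  also have "\<dots> \<le> \<bar>l\<bar> * t" using assms(4) by (intro mult_left_mono) auto
  finally have "exp (l * s) \<le> exp (\<bar>l\<bar> * t)" by simp
  moreover have "\<bar>\<alpha> i s\<bar> \<le> abar i" using admissible_bound[OF assms(1-3)] .
  ultimately show ?thesis by (simp add: abs_mult mult_mono)
qed

lemma integrable_exp_mult_admissible: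
  assumes "admissible k abar \<alpha>" "i \<in> {1..k}" "0 \<le> a"
  shows "integrable (lebesgue_on {a..b}) (\<lambda>s. exp (l * s) * \<alpha> i s)"
proof (rule integrable_lebesgue_on_interval_bounded[where B = "exp (\<bar>l\<bar> * b) * abar i"])
  show "(\<lambda>s. exp (l * s) * \<alpha> i s) \<in> borel_measurable (lebesgue_on {a..b})"
    using admissible_measurable_on[OF assms] by measurable
  show "\<bar>exp (l * s) * \<alpha> i s\<bar> \<le> exp (\<bar>l\<bar> * b) * abar i" if "a \<le> s" "s \<le> b" for s
    using abs_exp_mult_admissible_le[OF assms(1,2)] that assms(3) by simp
qed

lemma integrable_admissible:
  assumes "admissible k abar a" "admissible k abar b" "i \<in> {1..k}"
  shows "integrable (lebesgue_on {0..t}) (a i)"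
    and "integrable (lebesgue_on {0..t}) (\<lambda>s. (a i s)\<^sup>2)"
    and "integrable (lebesgue_on {0..t}) (\<lambda>s. (a i s - b i s)\<^sup>2)"
    and "integrable (lebesgue_on {0..t}) (\<lambda>s. \<bar>a i s - b i s\<bar>)"
proof -
  note [measurable] = admissible_measurable_on[OF assms(1,3)] admissible_measurable_on[OF assms(2,3)]
  have bnd: "\<bar>a i s\<bar> \<le> abar i" if "0 \<le> s" for s
    using admissible_bound[OF assms(1,3) that] .
  have diff_bnd: "\<bar>a i s - b i s\<bar> \<le> 2 * abar i" if "0 \<le> s" for s
    using bnd[OF that] admissible_bound[OF assms(2,3) that] abs_triangle_ineq4[of "a i s" "b i s"]
    by linarith
  show "integrable (lebesgue_on {0..t}) (a i)"
    by (rule integrable_lebesgue_on_interval_bounded[where B = "abar i"]) (use bnd in auto)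
  show "integrable (lebesgue_on {0..t}) (\<lambda>s. (a i s)\<^sup>2)"
    by (rule integrable_lebesgue_on_interval_bounded[where B = "(abar i)\<^sup>2"])
       (use admissible_square_bound[OF assms(1,3)] in auto)
  show "integrable (lebesgue_on {0..t}) (\<lambda>s. (a i s - b i s)\<^sup>2)"
  proof (rule integrable_lebesgue_on_interval_bounded[where B = "(2 * abar i)\<^sup>2"])
    fix s :: real assume "0 \<le> s"
    from power_mono[OF diff_bnd[OF this] abs_ge_zero, of 2]
    show "\<bar>(a i s - b i s)\<^sup>2\<bar> \<le> (2 * abar i)\<^sup>2" by simp
  qed measurable
  show "integrable (lebesgue_on {0..t}) (\<lambda>s. \<bar>a i s - b i s\<bar>)"
    by (rule integrable_lebesgue_on_interval_bounded[where B = "2 * abar i"]) (use diff_bnd in auto)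
qed

lemma integral_square_midpoint_admissible:
  fixes t :: real
  assumes "admissible k abar a" "admissible k abar b" "i \<in> {1..k}"
  defines "M \<equiv> lebesgue_on {0..t}"
  shows "integral\<^sup>L M (\<lambda>s. ((a i s + b i s) / 2)\<^sup>2) + integral\<^sup>L M (\<lambda>s. (a i s - b i s)\<^sup>2) / 4
       = (integral\<^sup>L M (\<lambda>s. (a i s)\<^sup>2) + integral\<^sup>L M (\<lambda>s. (b i s)\<^sup>2)) / 2"
proof -
  note int = integrable_admissible[OF assms(1-3), where t=t]
    integrable_admissible(2)[OF assms(2,1,3), where t=t]
    integrable_admissible(2)[OF admissible_midpoint[OF assms(1,2)] assms(1,3), where t=t]
  have "integral\<^sup>L M (\<lambda>s. ((a i s + b i s) / 2)\<^sup>2) + integral\<^sup>L M (\<lambda>s. (a i s - b i s)\<^sup>2) / 4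
      = integral\<^sup>L M (\<lambda>s. ((a i s + b i s) / 2)\<^sup>2 + (a i s - b i s)\<^sup>2 / 4)"
    unfolding M_def using int by (simp add: Bochner_Integration.integral_add)
  also have "\<dots> = integral\<^sup>L M (\<lambda>s. ((a i s)\<^sup>2 + (b i s)\<^sup>2) / 2)"
    by (rule Bochner_Integration.integral_cong) (auto simp: power2_eq_square field_simps)
  also have "\<dots> = (integral\<^sup>L M (\<lambda>s. (a i s)\<^sup>2) + integral\<^sup>L M (\<lambda>s. (b i s)\<^sup>2)) / 2"
    unfolding M_def using int by simp
  finally show ?thesis .
qed

lemma scaled_coeff_midpoint:
  assumes "admissible k abar a" "admissible k abar b"
  shows "scaled_coeff lam k c z j (\<lambda>i s. (a i s + b i s) / 2) t =
    (scaled_coeff lam k c z j a t + scaled_coeff lam k c z j b t) / 2"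
proof -
  let ?I = "\<lambda>\<alpha> i. integral\<^sup>L (lebesgue_on {0..t}) (\<lambda>s. exp (lam j * s) * \<alpha> i s)"
  have "?I (\<lambda>i s. (a i s + b i s) / 2) i = (?I a i + ?I b i) / 2" if "i \<in> {1..k}" for i
    using integrable_exp_mult_admissible[OF assms(1) that order_refl, of t "lam j"]
      integrable_exp_mult_admissible[OF assms(2) that order_refl, of t "lam j"]
    by (simp add: distrib_left add_divide_distrib Bochner_Integration.integral_add)
  then have "(\<Sum>i=1..k. ?I (\<lambda>i s. (a i s + b i s) / 2) i * c i j) =
      ((\<Sum>i=1..k. ?I a i * c i j) + (\<Sum>i=1..k. ?I b i * c i j)) / 2"
    by (simp add: sum_divide_distrib[symmetric] sum.distrib[symmetric] algebra_simps)
  then show ?thesis unfolding scaled_coeff_def by (simp add: field_simps)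
qed

lemma scaled_coeff_Lipschitz:
  assumes adm: "admissible k abar \<alpha>" and t: "0 \<le> t1" "t1 \<le> t2"
  shows "\<bar>scaled_coeff lam k c z j \<alpha> t2 - scaled_coeff lam k c z j \<alpha> t1\<bar>
    \<le> (\<Sum>i=1..k. \<bar>c i j\<bar> * (exp (\<bar>lam j\<bar> * t2) * abar i)) * (t2 - t1)"
proof -
  let ?f = "\<lambda>i s. exp (lam j * s) * \<alpha> i s"
  let ?I = "\<lambda>i t. integral\<^sup>L (lebesgue_on {0..t}) (?f i)"
  have I_diff: "\<bar>?I i t2 - ?I i t1\<bar> \<le> exp (\<bar>lam j\<bar> * t2) * abar i * (t2 - t1)" if i: "i \<in> {1..k}" for i
  proof -
    have "?I i t2 = ?I i t1 + integral\<^sup>L (lebesgue_on {t1..t2}) (?f i)"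
      using Equivalence_Measurable_On_Borel.integral_combine[OF
          integrable_exp_mult_admissible[OF adm i order_refl, of t2 "lam j"]] t by auto
    moreover have "\<bar>integral\<^sup>L (lebesgue_on {t1..t2}) (?f i)\<bar> \<le> exp (\<bar>lam j\<bar> * t2) * abar i * (t2 - t1)"
    proof (rule abs_integral_lebesgue_on_interval_le)
      show "?f i \<in> borel_measurable (lebesgue_on {t1..t2})"
        using admissible_measurable_on[OF adm i t(1)] by measurable
      show "\<bar>?f i s\<bar> \<le> exp (\<bar>lam j\<bar> * t2) * abar i" if "t1 \<le> s" "s \<le> t2" for s
        using abs_exp_mult_admissible_le[OF adm i] that t by simp
    qed (use t in auto)
    ultimately show ?thesis by simp
  qed
  have term_le: "\<bar>(?I i t2 - ?I i t1) * c i j\<bar> \<le> \<bar>c i j\<bar> * (exp (\<bar>lam j\<bar> * t2) * abar i) * (t2 - t1)"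
    if "i \<in> {1..k}" for i
    using mult_right_mono[OF I_diff[OF that] abs_ge_zero[of "c i j"]] by (simp add: abs_mult mult_ac)
  have diff_eq: "scaled_coeff lam k c z j \<alpha> t2 - scaled_coeff lam k c z j \<alpha> t1 =
      (\<Sum>i=1..k. (?I i t2 - ?I i t1) * c i j)"
    unfolding scaled_coeff_def by (simp add: sum_subtractf[symmetric] algebra_simps)
  have "\<bar>scaled_coeff lam k c z j \<alpha> t2 - scaled_coeff lam k c z j \<alpha> t1\<bar>
      \<le> (\<Sum>i=1..k. \<bar>(?I i t2 - ?I i t1) * c i j\<bar>)"
    unfolding diff_eq by (rule sum_abs)
  also have "\<dots> \<le> (\<Sum>i=1..k. \<bar>c i j\<bar> * (exp (\<bar>lam j\<bar> * t2) * abar i) * (t2 - t1))"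
    by (rule sum_mono) (rule term_le)
  also have "\<dots> = (\<Sum>i=1..k. \<bar>c i j\<bar> * (exp (\<bar>lam j\<bar> * t2) * abar i)) * (t2 - t1)"
    by (simp add: sum_distrib_right)
  finally show ?thesis .
qed

section \<open>The infimal time is attained\<close>

lemma scaled_coeff_limit_of_AE_Cauchy:
  assumes adm: "\<And>n. admissible k abar (h n)" and t: "0 \<le> t"
    and Cauchy: "\<forall>i\<in>{1..k}. AE s in lebesgue_on {0..t}. Cauchy (\<lambda>n. h n i s)"
  shows "\<exists>\<alpha>. admissible k abar \<alpha> \<and>
    (\<forall>j. (\<lambda>n. scaled_coeff lam k c z j (h n) t) \<longlonglongrightarrow> scaled_coeff lam k c z j \<alpha> t)"
proof -
  define M where "M = lebesgue_on {0..t}"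
  \<comment> \<open>The pointwise limit exists only almost everywhere; clipping keeps the bound everywhere.\<close>
  define \<alpha> where "\<alpha> i s = max (- abar i) (min (abar i) (lim (\<lambda>n. h n i s)))" for i s
  have abar: "0 \<le> abar i" if "i \<in> {1..k}" for i
    using admissible_bound[OF adm that order_refl, of 0] by linarith
  have adm_\<alpha>: "admissible k abar \<alpha>" unfolding admissible_def
  proof (intro ballI conjI allI impI)
    fix i assume i: "i \<in> {1..k}"
    have "(\<lambda>s. lim (\<lambda>n. h n i s)) \<in> borel_measurable (lebesgue_on {0..})"
      by (rule borel_measurable_lim_metric) (use adm i in \<open>auto simp: admissible_def\<close>)
    then show "\<alpha> i \<in> borel_measurable (lebesgue_on {0..})"
      unfolding \<alpha>_def by measurable
    show "\<bar>\<alpha> i s\<bar> \<le> abar i" for s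
      using abar[OF i] unfolding \<alpha>_def by auto
  qed
  have conv: "AE s in M. (\<lambda>n. h n i s) \<longlonglongrightarrow> \<alpha> i s" if i: "i \<in> {1..k}" for i
    using Cauchy[rule_format, OF i, folded M_def] AE_space[of M]
  proof eventually_elim
    case (elim s)
    then have s: "0 \<le> s" unfolding M_def by (auto simp: space_restrict_space)
    have lim: "(\<lambda>n. h n i s) \<longlonglongrightarrow> lim (\<lambda>n. h n i s)"
      using elim(1) by (simp add: Cauchy_convergent_iff convergent_LIMSEQ_iff)
    have "\<bar>h n i s\<bar> \<le> abar i" for n using admissible_bound[OF adm i s] .
    then have "\<bar>lim (\<lambda>n. h n i s)\<bar> \<le> abar i"
      by (intro tendsto_upperbound[OF tendsto_rabs[OF lim]] always_eventually) auto
    then show ?case using lim unfolding \<alpha>_def by (simp add: abs_le_iff)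
  qed
  have "(\<lambda>n. integral\<^sup>L M (\<lambda>s. exp (lam j * s) * h n i s)) \<longlonglongrightarrow> integral\<^sup>L M (\<lambda>s. exp (lam j * s) * \<alpha> i s)"
    if i: "i \<in> {1..k}" for i j
  proof (rule integral_dominated_convergence[where w = "\<lambda>s. exp (\<bar>lam j\<bar> * t) * abar i"])
    show "(\<lambda>s. exp (lam j * s) * \<alpha> i s) \<in> borel_measurable M"
      unfolding M_def using admissible_measurable_on[OF adm_\<alpha> i order_refl] by measurable
    show "(\<lambda>s. exp (lam j * s) * h n i s) \<in> borel_measurable M" for n
      unfolding M_def using admissible_measurable_on[OF adm i order_refl] by measurable
    show "integrable M (\<lambda>s. exp (\<bar>lam j\<bar> * t) * abar i)"
      unfolding M_def by (rule integrable_lebesgue_on_interval_bounded) auto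
    show "AE s in M. (\<lambda>n. exp (lam j * s) * h n i s) \<longlonglongrightarrow> exp (lam j * s) * \<alpha> i s"
      using conv[OF i] by eventually_elim (auto intro: tendsto_mult_left)
    show "AE s in M. norm (exp (lam j * s) * h n i s) \<le> exp (\<bar>lam j\<bar> * t) * abar i" for n
      using AE_space[of M]
      by eventually_elim
         (use abs_exp_mult_admissible_le[OF adm i] in \<open>auto simp: M_def space_restrict_space\<close>)
  qed
  then have "(\<lambda>n. scaled_coeff lam k c z j (h n) t) \<longlonglongrightarrow> scaled_coeff lam k c z j \<alpha> t" for j
    unfolding scaled_coeff_def M_def[symmetric]
    by (intro tendsto_add tendsto_const tendsto_sum tendsto_mult_right) auto
  with adm_\<alpha> show ?thesis by blast
qed

lemma residual_at_Inf_reaching_times_small: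
  assumes abar: "\<forall>i\<in>{1..k}. abar i > 0"
    and ne: "reaching_times lam k c z m abar \<noteq> {}" and e: "e > 0"
  shows "\<exists>\<alpha>. admissible k abar \<alpha> \<and>
    (\<Sum>j=1..m. \<bar>scaled_coeff lam k c z j \<alpha> (Inf (reaching_times lam k c z m abar))\<bar>) \<le> e"
proof -
  define Ts where "Ts = reaching_times lam k c z m abar"
  define ts where "ts = Inf Ts"
  define C where "C = (\<Sum>j=1..m. \<Sum>i=1..k. \<bar>c i j\<bar> * (exp (\<bar>lam j\<bar> * (ts + 1)) * abar i))"
  have bdd: "bdd_below Ts" unfolding Ts_def reaching_times_def bdd_below_def by auto
  have ts0: "0 \<le> ts"
    unfolding ts_def using ne by (intro cInf_greatest) (auto simp: Ts_def reaching_times_def)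
  have C0: "0 \<le> C" unfolding C_def using abar by (intro sum_nonneg mult_nonneg_nonneg) (auto intro: less_imp_le)
  define \<delta> where "\<delta> = min 1 (e / (C + 1))"
  have \<delta>0: "0 < \<delta>" unfolding \<delta>_def using e C0 by auto
  obtain t where t: "t \<in> Ts" "t < ts + \<delta>"
    using cInf_lessD[of Ts "ts + \<delta>"] ne \<delta>0 unfolding ts_def Ts_def by auto
  have tts: "ts \<le> t" unfolding ts_def using bdd t(1) by (rule cInf_lower[rotated])
  from t(1) obtain \<alpha> where adm: "admissible k abar \<alpha>"
    and reach: "\<forall>j\<in>{1..m}. scaled_coeff lam k c z j \<alpha> t = 0"
    unfolding Ts_def reaching_times_def by auto
  have "(\<Sum>j=1..m. \<bar>scaled_coeff lam k c z j \<alpha> ts\<bar>)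
      = (\<Sum>j=1..m. \<bar>scaled_coeff lam k c z j \<alpha> t - scaled_coeff lam k c z j \<alpha> ts\<bar>)"
    using reach by (intro sum.cong) auto
  also have "\<dots> \<le> (\<Sum>j=1..m. (\<Sum>i=1..k. \<bar>c i j\<bar> * (exp (\<bar>lam j\<bar> * t) * abar i)) * (t - ts))"
    by (intro sum_mono scaled_coeff_Lipschitz[OF adm ts0 tts])
  also have "\<dots> \<le> (\<Sum>j=1..m. (\<Sum>i=1..k. \<bar>c i j\<bar> * (exp (\<bar>lam j\<bar> * (ts + 1)) * abar i)) * (t - ts))"
  proof (intro sum_mono mult_right_mono mult_left_mono)
    fix j
    have "t \<le> ts + 1" using t(2) unfolding \<delta>_def by linarith
    then show "exp (\<bar>lam j\<bar> * t) \<le> exp (\<bar>lam j\<bar> * (ts + 1))"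
      by (simp add: mult_left_mono)
  qed (use tts abar in \<open>auto intro: less_imp_le\<close>)
  also have "\<dots> = C * (t - ts)" unfolding C_def by (simp add: sum_distrib_right)
  also have "\<dots> \<le> C * (e / (C + 1))"
    using t(2) tts C0 unfolding \<delta>_def by (intro mult_left_mono) auto
  also have "\<dots> \<le> e" using C0 e by (simp add: field_simps)
  finally show ?thesis using adm unfolding ts_def Ts_def by blast
qed

lemma Inf_reaching_times_mem:
  assumes abar: "\<forall>i\<in>{1..k}. abar i > 0" and ne: "reaching_times lam k c z m abar \<noteq> {}"
  shows "Inf (reaching_times lam k c z m abar) \<in> reaching_times lam k c z m abar"
proof -
  define ts where "ts = Inf (reaching_times lam k c z m abar)"
  have ts0: "0 \<le> ts"
    unfolding ts_def using ne by (intro cInf_greatest) (auto simp: reaching_times_def)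
  define M where "M = lebesgue_on {0..ts}"
  define D where "D \<alpha> = (\<Sum>j=1..m. \<bar>scaled_coeff lam k c z j \<alpha> ts\<bar>)" for \<alpha>
  define Nrm where "Nrm \<alpha> = (\<Sum>i=1..k. integral\<^sup>L M (\<lambda>s. (\<alpha> i s)\<^sup>2))" for \<alpha> :: "nat \<Rightarrow> real \<Rightarrow> real"
  define Q where "Q a b = (\<Sum>i=1..k. integral\<^sup>L M (\<lambda>s. (a i s - b i s)\<^sup>2))" for a b :: "nat \<Rightarrow> real \<Rightarrow> real"
  define mid where "mid a b = (\<lambda>i s. (a i s + b i s) / 2)" for a b :: "nat \<Rightarrow> real \<Rightarrow> real"
  define U where "U = {\<alpha>. admissible k abar \<alpha>}"
  have mid: "mid a b \<in> U \<and> D (mid a b) \<le> max (D a) (D b) \<and> Nrm (mid a b) + Q a b / 4 = (Nrm a + Nrm b) / 2"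
    if "a \<in> U" "b \<in> U" for a b
  proof (intro conjI)
    have a: "admissible k abar a" and b: "admissible k abar b" using that unfolding U_def by auto
    show "mid a b \<in> U" unfolding U_def mid_def using admissible_midpoint[OF a b] by simp
    have "D (mid a b) = (\<Sum>j=1..m. \<bar>(scaled_coeff lam k c z j a ts + scaled_coeff lam k c z j b ts) / 2\<bar>)"
      unfolding D_def mid_def scaled_coeff_midpoint[OF a b] ..
    also have "\<dots> \<le> (\<Sum>j=1..m. (\<bar>scaled_coeff lam k c z j a ts\<bar> + \<bar>scaled_coeff lam k c z j b ts\<bar>) / 2)"
      by (intro sum_mono) auto
    also have "\<dots> = (D a + D b) / 2"
      unfolding D_def by (simp add: sum.distrib sum_divide_distrib[symmetric])
    finally have "D (mid a b) \<le> (D a + D b) / 2" .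
    then show "D (mid a b) \<le> max (D a) (D b)" by simp
    have "Nrm (mid a b) + Q a b / 4 = (\<Sum>i=1..k. integral\<^sup>L M (\<lambda>s. ((a i s + b i s) / 2)\<^sup>2)
        + integral\<^sup>L M (\<lambda>s. (a i s - b i s)\<^sup>2) / 4)"
      unfolding Nrm_def Q_def mid_def by (simp add: sum.distrib sum_divide_distrib)
    also have "\<dots> = (\<Sum>i=1..k. (integral\<^sup>L M (\<lambda>s. (a i s)\<^sup>2) + integral\<^sup>L M (\<lambda>s. (b i s)\<^sup>2)) / 2)"
      unfolding M_def by (intro sum.cong refl integral_square_midpoint_admissible[OF a b])
    also have "\<dots> = (Nrm a + Nrm b) / 2"
      unfolding Nrm_def by (simp add: sum.distrib sum_divide_distrib[symmetric])
    finally show "Nrm (mid a b) + Q a b / 4 = (Nrm a + Nrm b) / 2" .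
  qed
  have Nrm_bound: "0 \<le> Nrm a \<and> Nrm a \<le> (\<Sum>i=1..k. (abar i)\<^sup>2 * ts)" if "a \<in> U" for a
  proof
    have a: "admissible k abar a" using that unfolding U_def by auto
    show "0 \<le> Nrm a" unfolding Nrm_def by (intro sum_nonneg) (simp add: integral_nonneg_AE)
    have "\<bar>integral\<^sup>L M (\<lambda>s. (a i s)\<^sup>2)\<bar> \<le> (abar i)\<^sup>2 * (ts - 0)" if i: "i \<in> {1..k}" for i
      unfolding M_def using admissible_measurable_on[OF a i order_refl, of ts]
        admissible_square_bound[OF a i] ts0
      by (intro abs_integral_lebesgue_on_interval_le) auto
    then show "Nrm a \<le> (\<Sum>i=1..k. (abar i)\<^sup>2 * ts)"
      unfolding Nrm_def by (intro sum_mono) auto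
  qed
  have small: "\<exists>a\<in>U. D a \<le> e" if "e > 0" for e
    using residual_at_Inf_reaching_times_small[OF abar ne that]
    unfolding U_def D_def ts_def by auto
  obtain h where h: "\<And>n. h n \<in> U" "\<And>n. D (h n) \<le> 1 / Suc n"
    and hQ: "\<And>e. e > 0 \<Longrightarrow> \<exists>N. \<forall>n\<ge>N. \<forall>l\<ge>N. Q (h n) (h l) / 4 \<le> e"
    using midpoint_minimizing_seq_Cauchy[of U mid D Nrm "\<lambda>a b. Q a b / 4", OF mid Nrm_bound small]
    by blast
  have adm: "admissible k abar (h n)" for n using h(1) unfolding U_def by auto
  have "\<exists>N. \<forall>a\<ge>N. \<forall>b\<ge>N. (LINT s|M. \<bar>h a i s - h b i s\<bar>) < e"
    if i: "i \<in> {1..k}" and "e > 0" for i e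
  proof (rule L1_Cauchy_if_L2_Cauchy[OF _ _ _ _ \<open>e > 0\<close>])
    show "finite_measure M" unfolding M_def by (rule finite_measure_lebesgue_on) auto
    show "integrable M (\<lambda>s. (h a i s - h b i s)\<^sup>2)" "integrable M (\<lambda>s. \<bar>h a i s - h b i s\<bar>)" for a b
      unfolding M_def using integrable_admissible[OF adm adm i] by auto
    have Q_ge: "(LINT s|M. (h a i s - h b i s)\<^sup>2) \<le> Q (h a) (h b)" for a b
      unfolding Q_def by (rule member_le_sum[OF i]) (simp_all add: integral_nonneg_AE)
    show "\<exists>N. \<forall>a\<ge>N. \<forall>b\<ge>N. (LINT s|M. (h a i s - h b i s)\<^sup>2) \<le> e'" if e': "e' > 0" for e'
    proof -
      obtain N where N: "\<forall>n\<ge>N. \<forall>l\<ge>N. Q (h n) (h l) / 4 \<le> e' / 4"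
        using hQ[of "e' / 4"] e' by auto
      then have "(LINT s|M. (h a i s - h b i s)\<^sup>2) \<le> e'" if "N \<le> a" "N \<le> b" for a b
        using Q_ge[of a b] that by fastforce
      then show ?thesis by blast
    qed
  qed
  moreover have "integrable M (h n i)" if "i \<in> {1..k}" for n i
    unfolding M_def using integrable_admissible(1)[OF adm adm that] .
  ultimately obtain r where r: "strict_mono r" "\<forall>i\<in>{1..k}. AE s in M. Cauchy (\<lambda>n. h (r n) i s)"
    using L1_Cauchy_common_AE_Cauchy_subseq[of "{1..k}" M h] by auto
  obtain \<alpha> where \<alpha>: "admissible k abar \<alpha>"
    and conv: "\<And>j. (\<lambda>n. scaled_coeff lam k c z j (h (r n)) ts) \<longlonglongrightarrow> scaled_coeff lam k c z j \<alpha> ts"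
    using scaled_coeff_limit_of_AE_Cauchy[OF adm ts0 r(2)[unfolded M_def]] by blast
  have "(\<lambda>n. D (h (r n))) \<longlonglongrightarrow> D \<alpha>"
    unfolding D_def by (intro tendsto_sum tendsto_rabs conv)
  moreover have "(\<lambda>n. D (h (r n))) \<longlonglongrightarrow> 0"
  proof (rule tendsto_sandwich[where f = "\<lambda>n. 0" and h = "\<lambda>n. 1 / Suc n"])
    show "\<forall>\<^sub>F n in sequentially. 0 \<le> D (h (r n))" unfolding D_def by (auto intro: sum_nonneg)
    have "1 / real (Suc (r n)) \<le> 1 / Suc n" for n
      using seq_suble[OF r(1), of n] by (intro divide_left_mono) auto
    then have "D (h (r n)) \<le> 1 / Suc n" for n
      using h(2)[of "r n"] by (rule order_trans[rotated])
    then show "\<forall>\<^sub>F n in sequentially. D (h (r n)) \<le> 1 / Suc n" by simp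
    show "(\<lambda>n. 1 / real (Suc n)) \<longlonglongrightarrow> 0" by (rule LIMSEQ_Suc[OF lim_const_over_n])
  qed simp
  ultimately have "D \<alpha> = 0" by (rule LIMSEQ_unique)
  then have "\<forall>j\<in>{1..m}. scaled_coeff lam k c z j \<alpha> ts = 0"
    unfolding D_def by (subst (asm) sum_nonneg_eq_0_iff) auto
  with \<alpha> ts0 show ?thesis unfolding ts_def reaching_times_def by blast
qed

section \<open>Some time is admissible\<close>

lemma exp_moment_of_exp_combination:
  fixes lam \<beta> :: "nat \<Rightarrow> real"
  assumes "\<forall>l\<in>{1..m}. lam j + lam l \<noteq> 0"
  shows "((\<lambda>s. exp (lam j * s) * (\<Sum>l=1..m. \<beta> l * exp (lam l * (s - T)))) has_integral
    exp (lam j * T) * (\<Sum>l=1..m. exp_gram lam j l * \<beta> l)) {T..T + 1}"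
proof -
  have "((\<lambda>s. \<Sum>l=1..m. exp (lam j * T) * \<beta> l * exp ((lam j + lam l) * (s - T))) has_integral
      (\<Sum>l=1..m. exp (lam j * T) * \<beta> l * exp_gram lam j l)) {T..T + 1}"
    using exp_has_integral[of T "T + 1"] assms unfolding exp_gram_def
    by (intro has_integral_sum finite_atLeastAtMost has_integral_mult_right) auto
  moreover have "(\<lambda>s. \<Sum>l=1..m. exp (lam j * T) * \<beta> l * exp ((lam j + lam l) * (s - T))) =
      (\<lambda>s. exp (lam j * s) * (\<Sum>l=1..m. \<beta> l * exp (lam l * (s - T))))"
    unfolding sum_distrib_left by (intro ext sum.cong refl) (simp add: algebra_simps flip: exp_add)
  ultimately show ?thesis by (simp add: sum_distrib_left algebra_simps)
qed

lemma reaching_times_nonempty: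
  assumes k: "k \<ge> 1" and abar: "\<forall>i\<in>{1..k}. abar i > 0"
    and pos: "\<forall>l\<in>{1..m}. lam l > 0" and inj: "inj_on lam {1..m}"
    and c1: "\<forall>j\<in>{1..m}. c 1 j \<noteq> 0"
  shows "reaching_times lam k c z m abar \<noteq> {}"
proof -
  obtain B where B: "\<And>w j. j \<in> {1..m} \<Longrightarrow> (\<Sum>l=1..m. exp_gram lam j l * (\<Sum>p=1..m. B l p * w p)) = w j"
    using injective_square_system_solvable[of m "exp_gram lam"] exp_gram_injective[OF pos inj] by blast
  \<comment> \<open>Moments that the control, acting on \<open>[T, T+1]\<close> through the first component, must produce.\<close>
  define w where "w T p = - z p * exp (- lam p * T) / c 1 p" for T p
  define \<beta> where "\<beta> T l = (\<Sum>p=1..m. B l p * w T p)" for T l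
  define bnd where "bnd T = (\<Sum>l=1..m. \<bar>\<beta> T l\<bar> * exp (lam l))" for T
  have "((\<lambda>T. w T p) \<longlongrightarrow> 0) at_top" if "p \<in> {1..m}" for p
  proof -
    have "((\<lambda>T. exp (- lam p * T)) \<longlongrightarrow> 0) at_top"
      using pos that by (intro filterlim_compose[OF exp_at_bot] filterlim_tendsto_neg_mult_at_bot
          tendsto_const filterlim_ident) auto
    then have "((\<lambda>T. (- z p / c 1 p) * exp (- lam p * T)) \<longlongrightarrow> (- z p / c 1 p) * 0) at_top"
      by (intro tendsto_mult tendsto_const)
    then show ?thesis unfolding w_def by simp
  qed
  then have "((\<lambda>T. \<beta> T l) \<longlongrightarrow> 0) at_top" for l
    unfolding \<beta>_def by (intro tendsto_null_sum tendsto_mult_right_zero) auto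
  then have "(bnd \<longlongrightarrow> 0) at_top"
    unfolding bnd_def[abs_def] by (intro tendsto_null_sum tendsto_mult_left_zero tendsto_rabs_zero)
  then have "\<forall>\<^sub>F T in at_top. 0 \<le> T \<and> bnd T < abar 1"
    using abar k by (intro eventually_conj eventually_ge_at_top order_tendstoD) auto
  then obtain T where T: "0 \<le> T" "bnd T < abar 1"
    by (auto dest: eventually_happens)
  define g where "g s = (\<Sum>l=1..m. \<beta> T l * exp (lam l * (s - T)))" for s
  define \<alpha> where "\<alpha> (i::nat) s = (if i = 1 \<and> T \<le> s \<and> s \<le> T + 1 then g s else 0)" for i s
  have g_le: "\<bar>g s\<bar> \<le> abar 1" if "T \<le> s" "s \<le> T + 1" for s
  proof -
    have "\<bar>g s\<bar> \<le> (\<Sum>l=1..m. \<bar>\<beta> T l * exp (lam l * (s - T))\<bar>)" unfolding g_def by (rule sum_abs)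
    also have "\<dots> \<le> bnd T" unfolding bnd_def
      using pos that by (intro sum_mono) (simp add: abs_mult mult_left_mono)
    also have "\<dots> < abar 1" by (rule T(2))
    finally show ?thesis by simp
  qed
  have adm: "admissible k abar \<alpha>" unfolding admissible_def
  proof (intro ballI conjI allI impI)
    fix i assume i: "i \<in> {1..k}"
    show "\<alpha> i \<in> borel_measurable (lebesgue_on {0..})" unfolding \<alpha>_def g_def by measurable
    show "\<bar>\<alpha> i s\<bar> \<le> abar i" for s
      using g_le abar i unfolding \<alpha>_def by (auto simp: less_imp_le)
  qed
  have "integral\<^sup>L (lebesgue_on {0..T + 1}) (\<lambda>s. exp (lam j * s) * \<alpha> 1 s) = exp (lam j * T) * w T j"
    if j: "j \<in> {1..m}" for j
  proof -
    have "lam j + lam l \<noteq> 0" if "l \<in> {1..m}" for l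
      using pos that j by (metis add_pos_pos less_irrefl)
    then have "((\<lambda>s. exp (lam j * s) * g s) has_integral
        exp (lam j * T) * (\<Sum>l=1..m. exp_gram lam j l * \<beta> T l)) (cbox T (T + 1))"
      unfolding g_def cbox_interval by (intro exp_moment_of_exp_combination) auto
    also have "(\<Sum>l=1..m. exp_gram lam j l * \<beta> T l) = w T j"
      unfolding \<beta>_def by (rule B[OF j])
    finally have "((\<lambda>s. exp (lam j * s) * g s) has_integral exp (lam j * T) * w T j) (cbox T (T + 1))" .
    moreover have \<alpha>_1: "(\<lambda>s. exp (lam j * s) * \<alpha> 1 s) =
        (\<lambda>s. if s \<in> cbox T (T + 1) then exp (lam j * s) * g s else 0)"
      unfolding \<alpha>_def by auto
    ultimately have "((\<lambda>s. exp (lam j * s) * \<alpha> 1 s) has_integral exp (lam j * T) * w T j) {0..T + 1}"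
      unfolding \<alpha>_1 using T(1)
      by (subst cbox_interval[symmetric], subst has_integral_restrict_closed_subintervals_eq) auto
    moreover have "integrable (lebesgue_on {0..T + 1}) (\<lambda>s. exp (lam j * s) * \<alpha> 1 s)"
      using integrable_exp_mult_admissible[OF adm _ order_refl] k by auto
    ultimately show ?thesis
      by (simp add: lebesgue_integral_eq_integral integral_unique)
  qed
  then have "scaled_coeff lam k c z j \<alpha> (T + 1) = 0" if "j \<in> {1..m}" for j
    using k c1 that unfolding scaled_coeff_def
    by (simp add: sum.atLeast_Suc_atMost \<alpha>_def w_def mult_exp_exp)
  then have "T + 1 \<in> reaching_times lam k c z m abar"
    using T(1) adm unfolding reaching_times_def by auto
  then show ?thesis by blast
qed

lemma strict_mono_on_atLeastAtMost_if_Suc: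
  fixes f :: "nat \<Rightarrow> 'a::order"
  assumes "\<And>i. a \<le> i \<Longrightarrow> i < b \<Longrightarrow> f i < f (Suc i)"
  shows "strict_mono_on {a..b} f"
proof (rule strict_mono_onI)
  fix r s assume "r \<in> {a..b}" "s \<in> {a..b}" "r < s"
  then have rs: "a \<le> r" "s \<le> b" "Suc r \<le> s" by auto
  from rs(3) show "f r < f s"
  proof (induction rule: dec_induct)
    case base
    show ?case using assms rs by simp
  next
    case (step n)
    then show ?case using assms[of n] rs by (meson less_trans less_le_trans Suc_leD le_trans)
  qed
qed

text \<open>Only \<open>k \<ge> 1\<close>, \<open>0 < lam 1\<close>, (D1) and (D2) are used: the state enters solely through the
  Duhamel formula in \<open>sol_coeff\<close>, and \<open>y0 \<notin> S_set \<Omega> \<xi> m\<close> only rules out the trivial optimal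
  time \<open>0\<close>.\<close>

theorem theorem3p1:
  fixes \<Omega> \<omega> :: "'a::euclidean_space set"
    and \<xi> :: "nat \<Rightarrow> 'a \<Rightarrow> real" and lam :: "nat \<Rightarrow> real"
    and m k :: nat
  assumes "bounded \<Omega>" and "open \<Omega>" and "connected \<Omega>" and "\<Omega> \<noteq> {}"
    and "open \<omega>" and "\<omega> \<noteq> {}" and "\<omega> \<subseteq> \<Omega>"
    and "orthonormal_basis_L2 \<Omega> \<xi>"
    and "\<forall>i\<ge>1. dirichlet_eigenfun \<Omega> (\<xi> i) (lam i)"
    and "0 < lam 1" and "lam 1 < lam 2" and "\<forall>i\<ge>2. lam i \<le> lam (Suc i)"
    and "filterlim lam at_top sequentially"
    and "m \<ge> 2" and "k \<ge> 1"
    and D1: "\<forall>i\<in>{1..<m}. lam i < lam (Suc i)"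
    and D2: "\<forall>i\<in>{1..m}. \<forall>j\<in>{1..k}. l2_inner \<Omega> (\<lambda>x. indicator \<omega> x * \<xi> i x) (\<xi> j) \<noteq> 0"
  shows "\<forall>y0 \<in> L2 \<Omega>. y0 \<notin> S_set \<Omega> \<xi> m \<longrightarrow>
           (\<forall>abar :: nat \<Rightarrow> real. (\<forall>i\<in>{1..k}. abar i > 0) \<longrightarrow>
              has_optimal_control \<Omega> \<omega> \<xi> lam m k abar y0)"
proof (intro ballI impI allI)
  fix y0 and abar :: "nat \<Rightarrow> real"
  assume abar: "\<forall>i\<in>{1..k}. 0 < abar i"
  define c where "c i j = l2_inner \<Omega> (\<lambda>x. indicator \<omega> x * \<xi> i x) (\<xi> j)" for i j
  define z where "z j = l2_inner \<Omega> y0 (\<xi> j)" for j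
  have mono: "strict_mono_on {1..m} lam"
    using D1 by (intro strict_mono_on_atLeastAtMost_if_Suc) auto
  then have "\<forall>l\<in>{1..m}. lam l > 0"
    using \<open>0 < lam 1\<close> \<open>m \<ge> 2\<close> by (auto dest: strict_mono_on_less_eq[of _ _ 1] intro: less_le_trans)
  moreover have "\<forall>j\<in>{1..m}. c 1 j \<noteq> 0"
    using D2 \<open>k \<ge> 1\<close> unfolding c_def l2_inner_def by (auto simp: ac_simps)
  ultimately have "reaching_times lam k c z m abar \<noteq> {}"
    using reaching_times_nonempty \<open>k \<ge> 1\<close> abar strict_mono_on_imp_inj_on[OF mono] by blast
  then have "Inf (reaching_times lam k c z m abar) \<in> reaching_times lam k c z m abar"
    by (rule Inf_reaching_times_mem[OF abar])
  moreover have "{t. t \<ge> 0 \<and> (\<exists>\<alpha>. admissible k abar \<alpha> \<and> reaches \<Omega> \<omega> \<xi> lam m k \<alpha> y0 t)} =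
      reaching_times lam k c z m abar"
    unfolding reaching_times_def reaches_iff_scaled_coeff c_def z_def ..
  ultimately show "has_optimal_control \<Omega> \<omega> \<xi> lam m k abar y0"
    unfolding has_optimal_control_def by (auto simp: reaching_times_def)
qed
end
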